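(* Let $(X,d,\nu)$ be a metric measure space with $\nu$ doubling and supporting a local 1-Poincaré inequality, satisfying the standing assumptions below, and let $\Omega\subset X$ be a bounded $\nu$-measurable set with $0<\nu(\Omega)<\nu(X)$. Let $\psi\in BV(X,d,\nu)\cap L^\infty(X,\nu)$. For each $\varepsilon>0$ let $u_\varepsilon\in BV_{m^{\nu,\varepsilon}}(X)$ be a solution of the nonlocal least gradient problem for the boundary datum $\psi$, i.e. $u_\varepsilon=\psi$ $\nu$-a.e. on $X\setminus\Omega$ and $TV_{m^{\nu,\varepsilon}}(u_\varepsilon)\le TV_{m^{\nu,\varepsilon}}(v)$ for every $v\in BV_{m^{\nu,\varepsilon}}(X)$ with $v=\psi$ $\nu$-a.e. on $X\setminus\Omega$. Then there exist a constant $M\in[0,\infty)$ and a sequence $\varepsilon_k\to0$ such that for all $k$ $$\int_X \frac{1}{\nu(B(x,\varepsilon_k))}\int_{B(x,\varepsilon_k)}|u_{\varepsilon_k}(y)-u_{\varepsilon_k}(x)|\,d\nu(y)\,d\nu(x)\le M\varepsilon_k .$$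
   Context: $\nu$ is doubling if there is $C_d\ge1$ with $0<\nu(B(x,2r))\le C_d\,\nu(B(x,r))<\infty$ for all $x\in X$, $r>0$. For $u:X\to\mathbb{R}$, its slope is $|\nabla u|(x):=\limsup_{y\to x}|u(y)-u(x)|/d(x,y)$ (and $0$ at isolated points). $(X,d,\nu)$ supports a local 1-Poincaré inequality if there are $c>0$, $\lambda\ge1$ such that for every Lipschitz $u$ and every ball, $\int_{B(x,r)}|u-u_{B(x,r)}|\,d\nu\le c\,r\int_{B(x,\lambda r)}|\nabla u|\,d\nu$, where $u_{B}$ is the $\nu$-average of $u$ over $B$. $BV(X,d,\nu)$ is the set of $u\in L^1(X,\nu)$ for which there exist locally Lipschitz $u_n\to u$ in $L^1(X,\nu)$ with $\sup_n\int_X|\nabla u_n|\,d\nu<\infty$. The $\varepsilon$-step random walk is $m^{\nu,\varepsilon}_x:=\nu\llcorner B(x,\varepsilon)/\nu(B(x,\varepsilon))$; $\nu$ is invariant and reversible for it. $BV_{m}(X)$ is the set of $\nu$-measurable $u$ with $\int_X\int_X|u(y)-u(x)|\,dm_x(y)\,d\nu(x)<\infty$ and $TV_m(u):=\frac12\int_X\int_X|u(y)-u(x)|\,dm_x(y)\,d\nu(x)$. Standing assumptions: $(X,d)$ is Polish, $\nu(X)<\infty$, and $\nu$ is ergodic for $m^{\nu,\varepsilon}$. *)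

theory Defs
  imports "HOL-Analysis.Analysis" "HOL-Library.Liminf_Limsup"
begin

definition doubling_measure :: "'a::metric_space measure \<Rightarrow> bool" where
  "doubling_measure nu \<longleftrightarrow> (\<exists>Cd\<ge>1. \<forall>x r. r > 0 \<longrightarrow>
      0 < emeasure nu (ball x (2*r)) \<and>
      emeasure nu (ball x (2*r)) \<le> ennreal Cd * emeasure nu (ball x r) \<and>
      emeasure nu (ball x r) < \<infinity>)"

definition slope :: "('a::metric_space \<Rightarrow> real) \<Rightarrow> 'a \<Rightarrow> ennreal" where
  "slope u x = (if at x = bot then 0
     else Limsup (at x) (\<lambda>y. ennreal (\<bar>u y - u x\<bar> / dist y x)))"

definition locally_lipschitz :: "('a::metric_space \<Rightarrow> real) \<Rightarrow> bool" where
  "locally_lipschitz u \<longleftrightarrow> (\<forall>x. \<exists>r>0. \<exists>L. L-lipschitz_on (ball x r) u)"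

definition avg :: "'a measure \<Rightarrow> 'a set \<Rightarrow> ('a \<Rightarrow> real) \<Rightarrow> real" where
  "avg nu B u = (\<integral>y\<in>B. u y \<partial>nu) / measure nu B"

definition poincare_1 :: "'a::metric_space measure \<Rightarrow> bool" where
  "poincare_1 nu \<longleftrightarrow> (\<exists>c>0. \<exists>lam\<ge>1. \<forall>u x r. (\<exists>L. L-lipschitz_on UNIV u) \<longrightarrow> r > 0 \<longrightarrow>
      (\<integral>\<^sup>+ y\<in>ball x r. ennreal \<bar>u y - avg nu (ball x r) u\<bar> \<partial>nu)
        \<le> ennreal (c * r) * (\<integral>\<^sup>+ y\<in>ball x (lam * r). slope u y \<partial>nu))"

definition BV_metric :: "'a::metric_space measure \<Rightarrow> ('a \<Rightarrow> real) set" where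
  "BV_metric nu = {u. integrable nu u \<and>
      (\<exists>un :: nat \<Rightarrow> 'a \<Rightarrow> real. (\<forall>n. locally_lipschitz (un n)) \<and>
         (\<lambda>n. \<integral>\<^sup>+ x. ennreal \<bar>un n x - u x\<bar> \<partial>nu) \<longlonglongrightarrow> 0 \<and>
         (SUP n. \<integral>\<^sup>+ x. slope (un n) x \<partial>nu) < \<infinity>)}"

definition Linfty :: "'a measure \<Rightarrow> ('a \<Rightarrow> real) set" where
  "Linfty nu = {u. u \<in> borel_measurable nu \<and> (\<exists>C. AE x in nu. \<bar>u x\<bar> \<le> C)}"

definition rw_prob :: "'a::metric_space measure \<Rightarrow> real \<Rightarrow> 'a \<Rightarrow> 'a set \<Rightarrow> ennreal" where
  "rw_prob nu eps x A = emeasure nu (A \<inter> ball x eps) / emeasure nu (ball x eps)"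

definition nl_energy :: "'a::metric_space measure \<Rightarrow> real \<Rightarrow> ('a \<Rightarrow> real) \<Rightarrow> ennreal" where
  "nl_energy nu eps u = (\<integral>\<^sup>+ x. (1 / emeasure nu (ball x eps)) *
       (\<integral>\<^sup>+ y\<in>ball x eps. ennreal \<bar>u y - u x\<bar> \<partial>nu) \<partial>nu)"

definition BV_rw :: "'a::metric_space measure \<Rightarrow> real \<Rightarrow> ('a \<Rightarrow> real) set" where
  "BV_rw nu eps = {u. u \<in> borel_measurable nu \<and> nl_energy nu eps u < \<infinity>}"

definition TV_rw :: "'a::metric_space measure \<Rightarrow> real \<Rightarrow> ('a \<Rightarrow> real) \<Rightarrow> ennreal" where
  "TV_rw nu eps u = nl_energy nu eps u / 2"

definition rw_invariant_set :: "'a::metric_space measure \<Rightarrow> real \<Rightarrow> 'a set \<Rightarrow> bool" where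
  "rw_invariant_set nu eps B \<longleftrightarrow> B \<in> sets nu \<and> (\<forall>x\<in>B. rw_prob nu eps x B = 1)"

definition rw_ergodic :: "'a::metric_space measure \<Rightarrow> real \<Rightarrow> bool" where
  "rw_ergodic nu eps \<longleftrightarrow> (\<forall>B. rw_invariant_set nu eps B \<longrightarrow>
      emeasure nu B = 0 \<or> emeasure nu (space nu - B) = 0)"

definition nl_least_gradient :: "'a::metric_space measure \<Rightarrow> real \<Rightarrow> 'a set \<Rightarrow> ('a \<Rightarrow> real) \<Rightarrow> ('a \<Rightarrow> real) \<Rightarrow> bool" where
  "nl_least_gradient nu eps \<Omega> psi u \<longleftrightarrow> u \<in> BV_rw nu eps \<and> (AE x in nu. x \<notin> \<Omega> \<longrightarrow> u x = psi x) \<and>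
     (\<forall>v \<in> BV_rw nu eps. (AE x in nu. x \<notin> \<Omega> \<longrightarrow> v x = psi x) \<longrightarrow> TV_rw nu eps u \<le> TV_rw nu eps v)"

end

theory Submission
  imports Defs
begin

(* Testing the minimality of u_eps against the admissible competitor psi gives
   TV_eps(u_eps) <= TV_eps(psi), so it suffices to bound the nonlocal energy of psi by M eps
   uniformly in eps.  For a locally Lipschitz v and d(x,y) < eps, |v y - v x| is controlled, via
   the doubling property, by the mean oscillations of v on the balls of radius 2 eps around x and y;
   integrating, exchanging the order of integration and applying the Poincare inequality bounds the
   energy of v by a constant times eps times the integral of the slope of v.  For psi itself one
   passes to the limit along locally Lipschitz approximants converging almost everywhere, by Fatou's
   lemma. *)

section \<open>Lipschitz functions and nonnegative integrals\<close>

lemma mcshane_extension: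
  fixes u :: "'a::metric_space \<Rightarrow> real"
  assumes L: "L-lipschitz_on K u" and K: "K \<noteq> {}" and bdd: "bdd_below (u ` K)"
  obtains v where "L-lipschitz_on UNIV v" "\<And>x. x \<in> K \<Longrightarrow> v x = u x"
proof -
  have L0: "0 \<le> L" using lipschitz_on_nonneg[OF L] .
  obtain b where b: "\<And>w. w \<in> K \<Longrightarrow> b \<le> u w" using bdd by (auto simp: bdd_below_def)
  define v where "v y = (INF w\<in>K. u w + L * dist y w)" for y
  have bdd_v: "bdd_below ((\<lambda>w. u w + L * dist y w) ` K)" for y
    by (rule bdd_belowI2[where m=b]) (use b L0 in \<open>auto intro!: add_increasing2\<close>)
  have v_le: "v y \<le> u w + L * dist y w" if "w \<in> K" for y w
    unfolding v_def by (rule cInf_lower) (use that bdd_v in auto)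
  have v_le_v: "v y1 \<le> v y2 + L * dist y1 y2" for y1 y2
  proof -
    have "v y1 - L * dist y1 y2 \<le> v y2" unfolding v_def[of y2]
    proof (rule cINF_greatest[OF K])
      fix w assume w: "w \<in> K"
      have "v y1 \<le> u w + L * dist y1 w" by (rule v_le[OF w])
      also have "L * dist y1 w \<le> L * dist y1 y2 + L * dist y2 w"
        using L0 dist_triangle[of y1 w y2] by (simp add: mult_left_mono flip: distrib_left)
      finally show "v y1 - L * dist y1 y2 \<le> u w + L * dist y2 w" by simp
    qed
    then show ?thesis by simp
  qed
  have "L-lipschitz_on UNIV v"
  proof (rule lipschitz_onI[OF _ L0])
    fix x y :: 'a
    show "dist (v x) (v y) \<le> L * dist x y"
      using v_le_v[of x y] v_le_v[of y x] by (simp add: dist_real_def dist_commute abs_le_iff)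
  qed
  moreover have "v x = u x" if x: "x \<in> K" for x
  proof (rule antisym)
    show "v x \<le> u x" using v_le[OF x, of x] by simp
    show "u x \<le> v x" unfolding v_def
    proof (rule cINF_greatest[OF K])
      fix w assume w: "w \<in> K"
      have "dist (u x) (u w) \<le> L * dist x w" by (rule lipschitz_onD[OF L x w])
      then show "u x \<le> u w + L * dist x w" by (simp add: dist_real_def abs_le_iff)
    qed
  qed
  ultimately show ?thesis using that by blast
qed

lemma slope_cong_open:
  assumes "open U" "y \<in> U" "\<And>z. z \<in> U \<Longrightarrow> v z = u z"
  shows "slope v y = slope u y"
proof -
  have "eventually (\<lambda>z. z \<in> U) (at y)" by (rule eventually_at_in_open'[OF assms(1,2)])
  then have "eventually (\<lambda>z. ennreal (\<bar>v z - v y\<bar> / dist z y) = ennreal (\<bar>u z - u y\<bar> / dist z y)) (at y)"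
    by eventually_elim (use assms in auto)
  then show ?thesis unfolding slope_def by (simp add: Limsup_eq)
qed

lemma locally_lipschitz_continuous_on:
  assumes "locally_lipschitz u"
  shows "continuous_on UNIV u"
proof -
  have "isCont u x" for x
  proof -
    obtain r L where r: "r > 0" "L-lipschitz_on (ball x r) u"
      using assms unfolding locally_lipschitz_def by blast
    then show ?thesis
      using continuous_on_interior[of "ball x r" u x] lipschitz_on_continuous_on[OF r(2)] by simp
  qed
  then show ?thesis by (simp add: continuous_at_imp_continuous_on)
qed

text \<open>The slope of a continuous function need not be measurable, so its integrals over balls are
  lower integrals; a measurable minorant with the same integrals makes Fubini available.\<close>

lemma nn_integral_measurable_minorant:
  fixes s :: "'b \<Rightarrow> ennreal"
  obtains g where "g \<in> borel_measurable M" "\<And>x. g x \<le> s x" "integral\<^sup>N M g = integral\<^sup>N M s"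
proof -
  define A where "A = {g. simple_function M g \<and> g \<le> s}"
  have "(\<lambda>_. 0) \<in> A" unfolding A_def by (auto simp: le_fun_def)
  from ennreal_SUP_countable_SUP[of A "integral\<^sup>S M"] this
  obtain f :: "nat \<Rightarrow> ennreal" where f: "range f \<subseteq> integral\<^sup>S M ` A" "Sup (integral\<^sup>S M ` A) = Sup (range f)"
    by blast
  have "\<forall>n. \<exists>g\<in>A. f n = integral\<^sup>S M g" using f(1) by blast
  then obtain gs where gs: "\<And>n. gs n \<in> A" "\<And>n. f n = integral\<^sup>S M (gs n)" by metis
  have gs_simple: "simple_function M (gs n)" and gs_le: "gs n x \<le> s x" for n x
    using gs(1) unfolding A_def by (auto simp: le_fun_def)
  define g where "g x = (SUP n. gs n x)" for x
  have g_meas: "g \<in> borel_measurable M"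
    unfolding g_def using gs_simple by (intro borel_measurable_SUP) (auto intro: borel_measurable_simple_function)
  have g_le: "g x \<le> s x" for x unfolding g_def by (rule SUP_least) (rule gs_le)
  have "integral\<^sup>N M s = (SUP n. f n)" using f(2) unfolding nn_integral_def A_def by simp
  also have "\<dots> \<le> integral\<^sup>N M g"
  proof (rule SUP_least)
    fix n
    have "f n = integral\<^sup>N M (gs n)" using gs(2) nn_integral_eq_simple_integral[OF gs_simple] by simp
    also have "\<dots> \<le> integral\<^sup>N M g" by (rule nn_integral_mono) (auto simp: g_def intro: SUP_upper)
    finally show "f n \<le> integral\<^sup>N M g" .
  qed
  finally have "integral\<^sup>N M g = integral\<^sup>N M s"
    using nn_integral_mono[of M g s] g_le by (simp add: antisym)
  with g_meas g_le that show ?thesis by blast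
qed

lemma nn_integral_split:
  assumes "F \<in> borel_measurable M" "B \<in> sets M"
  shows "integral\<^sup>N M F = (\<integral>\<^sup>+x\<in>B. F x \<partial>M) + (\<integral>\<^sup>+x\<in>space M - B. F x \<partial>M)"
proof -
  have "integral\<^sup>N M F = (\<integral>\<^sup>+x. F x * indicator B x + F x * indicator (space M - B) x \<partial>M)"
    by (intro nn_integral_cong) (auto simp: indicator_def)
  also have "\<dots> = (\<integral>\<^sup>+x\<in>B. F x \<partial>M) + (\<integral>\<^sup>+x\<in>space M - B. F x \<partial>M)"
    using assms by (intro nn_integral_add) auto
  finally show ?thesis .
qed

lemma nn_integral_set_le_measurable_minorant:
  fixes s :: "'b \<Rightarrow> ennreal"
  assumes g_meas: "g \<in> borel_measurable M" and g_le: "\<And>x. g x \<le> s x"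
    and g_eq: "integral\<^sup>N M g = integral\<^sup>N M s" and fin: "integral\<^sup>N M s < \<infinity>"
    and B: "B \<in> sets M"
  shows "(\<integral>\<^sup>+x\<in>B. s x \<partial>M) \<le> (\<integral>\<^sup>+x\<in>B. g x \<partial>M)"
  unfolding nn_integral_def[of M "\<lambda>x. s x * indicator B x"]
proof (rule Sup_least, clarify)
  fix h assume h: "simple_function M h" "h \<le> (\<lambda>x. s x * indicator B x)"
  have h_le: "h x \<le> (if x \<in> B then s x else 0)" for x
  proof -
    have "h x \<le> s x * indicator B x" using h(2) by (simp add: le_fun_def)
    then show ?thesis by (cases "x \<in> B") auto
  qed
  define H where "H x = max (g x) (h x)" for x
  have H_meas: "H \<in> borel_measurable M"
    unfolding H_def using g_meas borel_measurable_simple_function[OF h(1)] by measurable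
  have H_le_g: "integral\<^sup>N M H \<le> integral\<^sup>N M g"
  proof -
    have "h x \<le> s x" for x using h_le[of x] by (simp split: if_splits)
    then show ?thesis unfolding g_eq H_def by (intro nn_integral_mono) (simp add: g_le)
  qed
  have g_fin: "(\<integral>\<^sup>+x\<in>space M - B. g x \<partial>M) \<noteq> \<infinity>"
    using nn_integral_mono[of M "\<lambda>x. g x * indicator (space M - B) x" g] fin g_eq
    by (auto simp: indicator_def top_unique)
  \<comment> \<open>\<open>H \<ge> g\<close>, but \<open>\<integral>H \<le> \<integral>g < \<infinity>\<close>; cancel the common finite part off \<open>B\<close>.\<close>
  have "(\<integral>\<^sup>+x\<in>space M - B. g x \<partial>M) + (\<integral>\<^sup>+x\<in>B. H x \<partial>M)
      \<le> (\<integral>\<^sup>+x\<in>space M - B. H x \<partial>M) + (\<integral>\<^sup>+x\<in>B. H x \<partial>M)"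
    by (intro add_right_mono nn_integral_mono) (auto simp: H_def indicator_def)
  also have "\<dots> \<le> (\<integral>\<^sup>+x\<in>space M - B. g x \<partial>M) + (\<integral>\<^sup>+x\<in>B. g x \<partial>M)"
    using H_le_g nn_integral_split[OF H_meas B] nn_integral_split[OF g_meas B] by (simp add: add.commute)
  finally have "(\<integral>\<^sup>+x\<in>B. H x \<partial>M) \<le> (\<integral>\<^sup>+x\<in>B. g x \<partial>M)"
    using g_fin by (simp add: ennreal_add_left_cancel_le)
  moreover have "integral\<^sup>S M h \<le> (\<integral>\<^sup>+x\<in>B. H x \<partial>M)"
    unfolding nn_integral_eq_simple_integral[OF h(1), symmetric]
  proof (rule nn_integral_mono)
    fix x show "h x \<le> H x * indicator B x"
      using h_le[of x] by (cases "x \<in> B") (auto simp: H_def)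
  qed
  ultimately show "integral\<^sup>S M h \<le> (\<integral>\<^sup>+x\<in>B. g x \<partial>M)" by (rule order_trans[rotated])
qed

lemma set_nn_integral_abs_diff_le_liminf:
  assumes [measurable]: "\<And>n. w n \<in> borel_measurable M" "f \<in> borel_measurable M" "B \<in> sets M"
    and lim: "AE y in M. (\<lambda>n. w n y) \<longlonglongrightarrow> f y" and wx: "(\<lambda>n. w n x) \<longlonglongrightarrow> f x"
    and c: "c < top"
  shows "c * (\<integral>\<^sup>+y\<in>B. ennreal \<bar>f y - f x\<bar> \<partial>M) \<le> liminf (\<lambda>n. c * (\<integral>\<^sup>+y\<in>B. ennreal \<bar>w n y - w n x\<bar> \<partial>M))"
proof -
  have "c * (\<integral>\<^sup>+y\<in>B. ennreal \<bar>f y - f x\<bar> \<partial>M) = (\<integral>\<^sup>+y. c * (ennreal \<bar>f y - f x\<bar> * indicator B y) \<partial>M)"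
    by (rule nn_integral_cmult[symmetric]) measurable
  also have "\<dots> = (\<integral>\<^sup>+y. liminf (\<lambda>n. c * (ennreal \<bar>w n y - w n x\<bar> * indicator B y)) \<partial>M)"
  proof (rule nn_integral_cong_AE)
    from lim show "AE y in M. c * (ennreal \<bar>f y - f x\<bar> * indicator B y)
        = liminf (\<lambda>n. c * (ennreal \<bar>w n y - w n x\<bar> * indicator B y))"
    proof eventually_elim
      case (elim y)
      have "(\<lambda>n. ennreal \<bar>w n y - w n x\<bar> * indicator B y) \<longlonglongrightarrow> ennreal \<bar>f y - f x\<bar> * indicator B y"
      proof (cases "y \<in> B")
        case True
        have "(\<lambda>n. \<bar>w n y - w n x\<bar>) \<longlonglongrightarrow> \<bar>f y - f x\<bar>" by (intro tendsto_intros elim wx)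
        then show ?thesis using True by simp
      qed simp
      then have "(\<lambda>n. c * (ennreal \<bar>w n y - w n x\<bar> * indicator B y))
          \<longlonglongrightarrow> c * (ennreal \<bar>f y - f x\<bar> * indicator B y)"
        by (rule ennreal_tendsto_cmult[OF c])
      then show ?case by (rule lim_imp_Liminf[symmetric, rotated]) simp
    qed
  qed
  also have "\<dots> \<le> liminf (\<lambda>n. \<integral>\<^sup>+y. c * (ennreal \<bar>w n y - w n x\<bar> * indicator B y) \<partial>M)"
    by (rule nn_integral_liminf) measurable
  also have "\<dots> = liminf (\<lambda>n. c * (\<integral>\<^sup>+y\<in>B. ennreal \<bar>w n y - w n x\<bar> \<partial>M))"
    by (intro arg_cong[where f=liminf] ext nn_integral_cmult) measurable
  finally show ?thesis .
qed

section \<open>Doubling metric measure spaces\<close>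

definition separated :: "real \<Rightarrow> 'a::metric_space set \<Rightarrow> bool" where
  "separated e F \<longleftrightarrow> (\<forall>a\<in>F. \<forall>b\<in>F. a \<noteq> b \<longrightarrow> e \<le> dist a b)"

locale doubling_space = finite_measure nu for nu :: "'a::polish_space measure" +
  fixes C :: real
  assumes sets_eq_borel: "sets nu = sets borel"
    and doubling_const: "C \<ge> 1"
    and emeasure_ball_pos: "r > 0 \<Longrightarrow> 0 < emeasure nu (ball x r)"
    and emeasure_ball_double: "r > 0 \<Longrightarrow> emeasure nu (ball x (2 * r)) \<le> ennreal C * emeasure nu (ball x r)"
begin

definition vol :: "'a \<Rightarrow> real \<Rightarrow> real" where
  "vol x r = measure nu (ball x r)"

lemma space_eq_UNIV [simp]: "space nu = UNIV"
  using sets_eq_imp_space_eq[OF sets_eq_borel] by simp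

lemma sets_ball [measurable, simp]: "ball x r \<in> sets nu"
  using sets_eq_borel by simp

lemma emeasure_ball_eq_vol: "emeasure nu (ball x r) = ennreal (vol x r)"
  unfolding vol_def by (simp add: emeasure_eq_measure)

lemma vol_nonneg: "0 \<le> vol x r"
  unfolding vol_def by simp

lemma vol_pos: "r > 0 \<Longrightarrow> 0 < vol x r"
  using emeasure_ball_pos[of r x] unfolding emeasure_ball_eq_vol by (simp add: vol_nonneg)

lemma one_div_emeasure_ball: "r > 0 \<Longrightarrow> 1 / emeasure nu (ball x r) = ennreal (1 / vol x r)"
  using vol_pos[of r x] by (simp add: emeasure_ball_eq_vol divide_ennreal[of 1, symmetric])

lemma vol_double: "r > 0 \<Longrightarrow> vol x (2 * r) \<le> C * vol x r"
  using emeasure_ball_double[of r x] doubling_const unfolding emeasure_ball_eq_vol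
  by (simp add: ennreal_mult'[symmetric] vol_nonneg ennreal_le_iff)

lemma vol_mono: "r \<le> s \<Longrightarrow> vol x r \<le> vol x s"
  unfolding vol_def by (rule finite_measure_mono) auto

lemma vol_double_power: "r > 0 \<Longrightarrow> vol x (2^k * r) \<le> C^k * vol x r"
proof (induction k)
  case (Suc k)
  have "vol x (2^Suc k * r) = vol x (2 * (2^k * r))" by (simp add: mult.assoc)
  also have "\<dots> \<le> C * vol x (2^k * r)" by (rule vol_double) (use Suc in simp)
  also have "\<dots> \<le> C * (C^k * vol x r)" by (rule mult_left_mono[OF Suc.IH]) (use Suc doubling_const in auto)
  finally show ?case by (simp add: mult.assoc)
qed simp

lemma vol_le_power: "r > 0 \<Longrightarrow> s \<le> 2^k * r \<Longrightarrow> vol x s \<le> C^k * vol x r"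
  using vol_mono[of s "2^k * r" x] vol_double_power[of r x k] by linarith

lemma vol_le_shift:
  assumes "dist x y \<le> t"
  shows "vol y s \<le> vol x (s + t)"
proof -
  have "ball y s \<subseteq> ball x (s + t)"
  proof
    fix z assume "z \<in> ball y s"
    then show "z \<in> ball x (s + t)" using assms dist_triangle[of x z y] by simp
  qed
  then show ?thesis
    unfolding vol_def by (rule finite_measure_mono) simp
qed

lemma measurable_nu_of_borel: "f \<in> borel_measurable borel \<Longrightarrow> f \<in> borel_measurable nu"
  unfolding measurable_cong_sets[OF sets_eq_borel refl, of borel] .

lemma sets_pair_eq_borel: "sets (nu \<Otimes>\<^sub>M nu) = sets (borel :: ('a \<times> 'a) measure)"
  using sets_pair_measure_cong[OF sets_eq_borel sets_eq_borel] by (simp only: borel_prod)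

lemma pred_dist_less [measurable]: "Measurable.pred (nu \<Otimes>\<^sub>M nu) (\<lambda>p. dist (fst p) (snd p) < r)"
proof -
  have "open {p::'a \<times> 'a. dist (fst p) (snd p) < r}"
    by (intro open_Collect_less continuous_intros)
  then show ?thesis
    unfolding pred_def by (simp add: sets_pair_eq_borel space_pair_measure)
qed

lemma pred_mem_ball [measurable]: "Measurable.pred (nu \<Otimes>\<^sub>M nu) (\<lambda>p. snd p \<in> ball (fst p) r)"
  using pred_dist_less[of r] by simp

lemma indicator_ball_measurable [measurable]:
  "(\<lambda>p. indicator (ball (fst p) r) (snd p) :: ennreal) \<in> borel_measurable (nu \<Otimes>\<^sub>M nu)"
  unfolding indicator_def by measurable

lemma indicator_ball_swap: "indicator (ball x r) y = indicator (ball y r) x"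
  by (simp add: indicator_def dist_commute)

lemma vol_measurable [measurable]: "(\<lambda>x. vol x r) \<in> borel_measurable nu"
proof -
  have "{p. dist (fst p) (snd p) < r} \<in> sets (nu \<Otimes>\<^sub>M nu)"
    using pred_dist_less[of r] by (simp add: pred_def space_pair_measure)
  then have "(\<lambda>x. emeasure nu (Pair x -` {p. dist (fst p) (snd p) < r})) \<in> borel_measurable nu"
    by (rule measurable_emeasure_Pair)
  moreover have "Pair x -` {p. dist (fst p) (snd p) < r} = ball x r" for x
    by (auto simp: ball_def)
  ultimately show ?thesis
    unfolding vol_def measure_def by simp
qed

lemma avg_ball_measurable [measurable]:
  assumes [measurable]: "u \<in> borel_measurable nu"
  shows "(\<lambda>z. avg nu (ball z r) u) \<in> borel_measurable nu"
  unfolding avg_def set_lebesgue_integral_def vol_def[symmetric] by measurable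

lemma nn_integral_ball_swap:
  assumes "case_prod F \<in> borel_measurable (nu \<Otimes>\<^sub>M nu)"
  shows "(\<integral>\<^sup>+x. (\<integral>\<^sup>+y\<in>ball x r. F x y \<partial>nu) \<partial>nu) = (\<integral>\<^sup>+y. (\<integral>\<^sup>+x\<in>ball y r. F x y \<partial>nu) \<partial>nu)"
proof -
  interpret pair_sigma_finite nu nu ..
  have [measurable]: "(\<lambda>p. F (fst p) (snd p)) \<in> borel_measurable (nu \<Otimes>\<^sub>M nu)"
    using assms by (simp add: split_beta')
  have "(\<integral>\<^sup>+x. (\<integral>\<^sup>+y\<in>ball x r. F x y \<partial>nu) \<partial>nu) = (\<integral>\<^sup>+y. \<integral>\<^sup>+x. F x y * indicator (ball x r) y \<partial>nu \<partial>nu)"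
    by (rule Fubini'[symmetric]) (simp add: split_beta')
  then show ?thesis
    by (simp add: indicator_ball_swap[of _ r])
qed

lemma locally_lipschitz_measurable: "locally_lipschitz u \<Longrightarrow> u \<in> borel_measurable nu"
  by (intro measurable_nu_of_borel borel_measurable_continuous_onI locally_lipschitz_continuous_on)

lemma card_separated_le:
  assumes e: "e > 0" and k: "\<rho> + e / 2 \<le> 2^k * (e / 2)"
    and F: "finite F" "F \<subseteq> cball x \<rho>" "separated e F"
  shows "real (card F) * (vol x (e / 2) / C^k) \<le> measure nu UNIV"
proof -
  have vol_f: "vol x (e / 2) / C^k \<le> vol f (e / 2)" if "f \<in> F" for f
  proof -
    have "dist f x \<le> \<rho>" using F(2) that by (auto simp: dist_commute)
    then have "vol x (e / 2) \<le> vol f (e / 2 + \<rho>)" by (rule vol_le_shift)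
    also have "\<dots> \<le> C^k * vol f (e / 2)" by (rule vol_le_power) (use e k in auto)
    finally show ?thesis using doubling_const by (simp add: field_simps)
  qed
  have "disjoint_family_on (\<lambda>f. ball f (e / 2)) F"
    unfolding disjoint_family_on_def
  proof (intro ballI impI)
    fix a b assume "a \<in> F" "b \<in> F" "a \<noteq> b"
    then have ab: "e \<le> dist a b" using F(3) by (auto simp: separated_def)
    show "ball a (e / 2) \<inter> ball b (e / 2) = {}"
    proof (rule ccontr)
      assume "ball a (e / 2) \<inter> ball b (e / 2) \<noteq> {}"
      then obtain w where "dist a w < e / 2" "dist b w < e / 2" by auto
      then show False using ab dist_triangle[of a b w] by (simp add: dist_commute)
    qed
  qed
  then have "(\<Sum>f\<in>F. vol f (e / 2)) = measure nu (\<Union>f\<in>F. ball f (e / 2))"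
    unfolding vol_def by (intro finite_measure_finite_Union[symmetric]) (use F in auto)
  also have "\<dots> \<le> measure nu UNIV" using bounded_measure by simp
  finally show ?thesis
    using sum_mono[of F "\<lambda>_. vol x (e / 2) / C^k" "\<lambda>f. vol f (e / 2)"] vol_f by simp
qed

text \<open>A maximal \<open>e\<close>-separated subset of a ball is a finite \<open>e\<close>-net, since the doubling
  property bounds its cardinality.\<close>

lemma cball_finite_net:
  fixes x :: 'a
  assumes e: "e > 0"
  obtains N where "finite N" "cball x \<rho> \<subseteq> (\<Union>y\<in>N. ball y e)"
proof -
  obtain k where "(\<rho> + e / 2) / (e / 2) < 2^k" using real_arch_pow[of 2] by auto
  then have k: "\<rho> + e / 2 \<le> 2^k * (e / 2)" using e by (simp add: field_simps)
  define \<delta> where "\<delta> = vol x (e / 2) / C^k"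
  have \<delta>: "\<delta> > 0" unfolding \<delta>_def using vol_pos[of "e / 2" x] e doubling_const by simp
  define P where "P n \<longleftrightarrow> (\<exists>F. finite F \<and> F \<subseteq> cball x \<rho> \<and> separated e F \<and> card F = n)" for n
  have P0: "P 0" unfolding P_def by (rule exI[of _ "{}"]) (simp add: separated_def)
  have P_bounded: "\<forall>n. P n \<longrightarrow> n \<le> nat \<lceil>measure nu UNIV / \<delta>\<rceil>"
  proof (intro allI impI)
    fix n assume "P n"
    then obtain F where "finite F" "F \<subseteq> cball x \<rho>" "separated e F" "card F = n"
      unfolding P_def by auto
    then have "real n * \<delta> \<le> measure nu UNIV" using card_separated_le[OF e k] unfolding \<delta>_def by blast
    then have "real n \<le> measure nu UNIV / \<delta>" using \<delta> by (simp add: field_simps)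
    then show "n \<le> nat \<lceil>measure nu UNIV / \<delta>\<rceil>" by linarith
  qed
  obtain n where n: "P n" "\<forall>n'. P n' \<longrightarrow> n' \<le> n"
    using Nat.ex_has_greatest_nat[OF P0 P_bounded] by blast
  then obtain F where F: "finite F" "F \<subseteq> cball x \<rho>" "separated e F" "card F = n"
    unfolding P_def by auto
  have "cball x \<rho> \<subseteq> (\<Union>y\<in>F. ball y e)"
  proof
    fix s assume s: "s \<in> cball x \<rho>"
    show "s \<in> (\<Union>y\<in>F. ball y e)"
    proof (rule ccontr)
      assume far: "s \<notin> (\<Union>y\<in>F. ball y e)"
      then have "s \<notin> F" using e by auto
      moreover have "separated e (insert s F)"
        using F(3) far unfolding separated_def by (auto simp: dist_commute)
      ultimately have "P (Suc n)"
        unfolding P_def using F s by (intro exI[of _ "insert s F"]) simp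
      then show False using n(2) by auto
    qed
  qed
  with F(1) that show ?thesis by blast
qed

lemma compact_cball: "compact (cball (x::'a) \<rho>)"
  unfolding compact_eq_totally_bounded
proof (intro conjI allI impI)
  show "complete (cball x \<rho>)" by (simp add: complete_eq_closed)
  fix e :: real assume "e > 0"
  then obtain N where "finite N" "cball x \<rho> \<subseteq> (\<Union>y\<in>N. ball y e)"
    by (rule cball_finite_net)
  then show "\<exists>N. finite N \<and> cball x \<rho> \<subseteq> (\<Union>y\<in>N. ball y e)" by blast
qed

lemma locally_lipschitz_lipschitz_on_cball:
  fixes x :: 'a
  assumes "locally_lipschitz u"
  obtains L where "L-lipschitz_on (cball x \<rho>) u"
proof -
  have ll: "local_lipschitz {0::real} (cball x \<rho>) (\<lambda>_. u)"
  proof (rule local_lipschitzI)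
    fix t :: real and y assume "y \<in> cball x \<rho>"
    obtain r L where r: "r > 0" "L-lipschitz_on (ball y r) u"
      using assms unfolding locally_lipschitz_def by blast
    then have "L-lipschitz_on (cball y (r / 2) \<inter> cball x \<rho>) u"
      by (rule_tac lipschitz_on_subset) auto
    then show "\<exists>u'>0. \<exists>L. \<forall>t\<in>cball t u' \<inter> {0}. L-lipschitz_on (cball y u' \<inter> cball x \<rho>) u"
      using r by (intro exI[of _ "r / 2"]) auto
  qed
  obtain L where "\<And>t. t \<in> {0::real} \<Longrightarrow> L-lipschitz_on (cball x \<rho>) u"
    by (rule local_lipschitz_compact_implies_lipschitz[OF ll compact_cball]) auto
  then show ?thesis using that by blast
qed

lemma set_nn_integral_inverse_vol_le:
  assumes r: "r > 0" and s: "2 * s \<le> 2^k * r"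
  shows "(\<integral>\<^sup>+x\<in>ball y s. ennreal (1 / vol x r) \<partial>nu) \<le> ennreal (C^k)"
proof -
  have "ennreal (1 / vol x r) * indicator (ball y s) x \<le> ennreal (C^k / vol y s) * indicator (ball y s) x" for x
  proof (cases "x \<in> ball y s")
    case True
    then have "0 < s" by (auto intro: le_less_trans[OF zero_le_dist])
    from True have "vol y s \<le> vol x (s + s)" by (intro vol_le_shift) (simp add: dist_commute)
    also have "\<dots> \<le> C^k * vol x r" by (rule vol_le_power[OF r]) (use s in simp)
    finally have "1 / vol x r \<le> C^k / vol y s"
      using vol_pos[OF r, of x] vol_pos[OF \<open>0 < s\<close>, of y] by (simp add: field_simps)
    then show ?thesis using True by (simp add: ennreal_leI)
  qed simp
  then have "(\<integral>\<^sup>+x\<in>ball y s. ennreal (1 / vol x r) \<partial>nu)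
      \<le> (\<integral>\<^sup>+x. ennreal (C^k / vol y s) * indicator (ball y s) x \<partial>nu)"
    by (rule nn_integral_mono)
  also have "\<dots> = ennreal (C^k / vol y s) * ennreal (vol y s)"
    by (simp add: nn_integral_cmult_indicator emeasure_ball_eq_vol)
  also have "\<dots> \<le> ennreal (C^k)"
    using vol_nonneg[of y s] doubling_const by (cases "vol y s = 0") (simp_all flip: ennreal_mult)
  finally show ?thesis .
qed

lemma nn_integral_ball_average_le:
  assumes r: "r > 0" and s: "2 * s \<le> 2^k * r" and [measurable]: "g \<in> borel_measurable nu"
  shows "(\<integral>\<^sup>+x. ennreal (1 / vol x r) * (\<integral>\<^sup>+y\<in>ball x s. g y \<partial>nu) \<partial>nu) \<le> ennreal (C^k) * integral\<^sup>N nu g"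
proof -
  have "(\<integral>\<^sup>+x. ennreal (1 / vol x r) * (\<integral>\<^sup>+y\<in>ball x s. g y \<partial>nu) \<partial>nu)
      = (\<integral>\<^sup>+x. (\<integral>\<^sup>+y\<in>ball x s. ennreal (1 / vol x r) * g y \<partial>nu) \<partial>nu)"
    by (intro nn_integral_cong) (simp add: nn_integral_cmult[symmetric] mult.assoc)
  also have "\<dots> = (\<integral>\<^sup>+y. (\<integral>\<^sup>+x\<in>ball y s. ennreal (1 / vol x r) * g y \<partial>nu) \<partial>nu)"
    by (rule nn_integral_ball_swap) measurable
  also have "\<dots> = (\<integral>\<^sup>+y. g y * (\<integral>\<^sup>+x\<in>ball y s. ennreal (1 / vol x r) \<partial>nu) \<partial>nu)"
    by (intro nn_integral_cong) (simp add: nn_integral_cmult[symmetric] mult_ac)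
  also have "\<dots> \<le> (\<integral>\<^sup>+y. g y * ennreal (C^k) \<partial>nu)"
    by (intro nn_integral_mono mult_left_mono set_nn_integral_inverse_vol_le[OF r s]) simp
  also have "\<dots> = ennreal (C^k) * integral\<^sup>N nu g"
    by (simp add: nn_integral_multc mult.commute)
  finally show ?thesis .
qed

subsection \<open>Mean oscillation on balls\<close>

definition mean_osc :: "('a \<Rightarrow> real) \<Rightarrow> real \<Rightarrow> 'a \<Rightarrow> ennreal" where
  "mean_osc u R y = ennreal (1 / vol y R) * (\<integral>\<^sup>+z\<in>ball y R. ennreal \<bar>u y - avg nu (ball z R) u\<bar> \<partial>nu)"

lemma mean_osc_measurable [measurable]:
  assumes [measurable]: "u \<in> borel_measurable nu"
  shows "mean_osc u R \<in> borel_measurable nu"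
  unfolding mean_osc_def by measurable

lemma nn_integral_ball_eq_mean_osc:
  assumes "R > 0"
  shows "(\<integral>\<^sup>+z\<in>ball y R. ennreal \<bar>u y - avg nu (ball z R) u\<bar> \<partial>nu) = ennreal (vol y R) * mean_osc u R y"
  using vol_pos[OF assms, of y]
  by (simp add: mean_osc_def mult.assoc[symmetric] flip: ennreal_mult)

lemma abs_diff_le_mean_osc:
  assumes [measurable]: "u \<in> borel_measurable nu" and e: "\<epsilon> > 0" and xy: "dist x y < \<epsilon>"
  shows "ennreal \<bar>u y - u x\<bar> \<le> ennreal (C^2) * mean_osc u (2 * \<epsilon>) y + ennreal C * mean_osc u (2 * \<epsilon>) x"
proof -
  define R where "R = 2 * \<epsilon>"
  define a where "a z = avg nu (ball z R) u" for z
  have R: "R > 0" using e by (simp add: R_def)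
  have [measurable]: "a \<in> borel_measurable nu" unfolding a_def by measurable
  have vol_y: "vol y R \<le> C^2 * vol x \<epsilon>"
  proof -
    have "vol y R \<le> vol x (R + \<epsilon>)" by (rule vol_le_shift) (use xy in simp)
    also have "\<dots> \<le> C^2 * vol x \<epsilon>" by (rule vol_le_power[OF e]) (use e in \<open>simp add: R_def\<close>)
    finally show ?thesis .
  qed
  have vol_x: "vol x R \<le> C * vol x \<epsilon>" unfolding R_def by (rule vol_double[OF e])
  have ball_x: "ball x \<epsilon> \<subseteq> ball y R" "ball x \<epsilon> \<subseteq> ball x R"
  proof
    fix z assume "z \<in> ball x \<epsilon>"
    then show "z \<in> ball y R" using xy dist_triangle[of y z x] by (simp add: R_def dist_commute)
  next
    show "ball x \<epsilon> \<subseteq> ball x R" using e by (simp add: R_def subset_ball)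
  qed
  \<comment> \<open>Average \<open>\<bar>u y - u x\<bar> \<le> \<bar>u y - a z\<bar> + \<bar>u x - a z\<bar>\<close> over \<open>z \<in> B(x, \<epsilon>)\<close>.\<close>
  have "ennreal (vol x \<epsilon>) * ennreal \<bar>u y - u x\<bar> = ennreal \<bar>u y - u x\<bar> * emeasure nu (ball x \<epsilon>)"
    by (simp add: emeasure_ball_eq_vol mult.commute)
  also have "\<dots> = (\<integral>\<^sup>+z\<in>ball x \<epsilon>. ennreal \<bar>u y - u x\<bar> \<partial>nu)"
    by (rule nn_integral_cmult_indicator[symmetric]) simp
  also have "\<dots> \<le> (\<integral>\<^sup>+z\<in>ball x \<epsilon>. (ennreal \<bar>u y - a z\<bar> + ennreal \<bar>u x - a z\<bar>) \<partial>nu)"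
    by (intro nn_integral_mono mult_right_mono) (simp_all flip: ennreal_plus)
  also have "\<dots> = (\<integral>\<^sup>+z\<in>ball x \<epsilon>. ennreal \<bar>u y - a z\<bar> \<partial>nu) + (\<integral>\<^sup>+z\<in>ball x \<epsilon>. ennreal \<bar>u x - a z\<bar> \<partial>nu)"
    by (rule nn_set_integral_add) measurable
  also have "\<dots> \<le> (\<integral>\<^sup>+z\<in>ball y R. ennreal \<bar>u y - a z\<bar> \<partial>nu) + (\<integral>\<^sup>+z\<in>ball x R. ennreal \<bar>u x - a z\<bar> \<partial>nu)"
    using ball_x by (intro add_mono nn_set_integral_set_mono)
  also have "\<dots> = ennreal (vol y R) * mean_osc u R y + ennreal (vol x R) * mean_osc u R x"
    unfolding a_def by (simp add: nn_integral_ball_eq_mean_osc[OF R])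
  also have "\<dots> \<le> ennreal (C^2 * vol x \<epsilon>) * mean_osc u R y + ennreal (C * vol x \<epsilon>) * mean_osc u R x"
    by (intro add_mono mult_right_mono ennreal_leI vol_x vol_y) simp_all
  also have "\<dots> = ennreal (vol x \<epsilon>) * (ennreal (C^2) * mean_osc u R y + ennreal C * mean_osc u R x)"
    using doubling_const vol_nonneg[of x \<epsilon>] by (simp add: ennreal_mult distrib_left mult_ac)
  finally show ?thesis
    using vol_pos[OF e, of x] by (simp add: ennreal_mult_le_mult_iff R_def)
qed

lemma ball_average_abs_diff_le_mean_osc:
  assumes [measurable]: "u \<in> borel_measurable nu" and e: "\<epsilon> > 0"
  shows "(1 / emeasure nu (ball x \<epsilon>)) * (\<integral>\<^sup>+y\<in>ball x \<epsilon>. ennreal \<bar>u y - u x\<bar> \<partial>nu)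
    \<le> ennreal (C^2) * (ennreal (1 / vol x \<epsilon>) * (\<integral>\<^sup>+y\<in>ball x \<epsilon>. mean_osc u (2 * \<epsilon>) y \<partial>nu))
      + ennreal C * mean_osc u (2 * \<epsilon>) x"
proof -
  let ?G = "mean_osc u (2 * \<epsilon>)"
  have "(\<integral>\<^sup>+y\<in>ball x \<epsilon>. ennreal \<bar>u y - u x\<bar> \<partial>nu)
      \<le> (\<integral>\<^sup>+y\<in>ball x \<epsilon>. (ennreal (C^2) * ?G y + ennreal C * ?G x) \<partial>nu)"
    by (intro nn_integral_mono) (auto simp: abs_diff_le_mean_osc[OF _ e] split: split_indicator)
  also have "\<dots> = ennreal (C^2) * (\<integral>\<^sup>+y\<in>ball x \<epsilon>. ?G y \<partial>nu) + ennreal C * ?G x * ennreal (vol x \<epsilon>)"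
    by (simp add: nn_set_integral_add nn_integral_cmult nn_integral_cmult_indicator emeasure_ball_eq_vol
        mult.assoc)
  finally have "(1 / emeasure nu (ball x \<epsilon>)) * (\<integral>\<^sup>+y\<in>ball x \<epsilon>. ennreal \<bar>u y - u x\<bar> \<partial>nu)
      \<le> ennreal (1 / vol x \<epsilon>) * (ennreal (C^2) * (\<integral>\<^sup>+y\<in>ball x \<epsilon>. ?G y \<partial>nu)
        + ennreal C * ?G x * ennreal (vol x \<epsilon>))"
    unfolding one_div_emeasure_ball[OF e] by (rule mult_left_mono) simp
  also have "\<dots> = ennreal (C^2) * (ennreal (1 / vol x \<epsilon>) * (\<integral>\<^sup>+y\<in>ball x \<epsilon>. ?G y \<partial>nu))
      + ennreal C * ?G x * (ennreal (1 / vol x \<epsilon>) * ennreal (vol x \<epsilon>))"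
    by (simp add: distrib_left mult_ac)
  also have "ennreal (1 / vol x \<epsilon>) * ennreal (vol x \<epsilon>) = 1"
    using vol_pos[OF e, of x] by (simp flip: ennreal_mult)
  finally show ?thesis by simp
qed

lemma nl_energy_le_mean_osc:
  assumes [measurable]: "u \<in> borel_measurable nu" and e: "\<epsilon> > 0"
  shows "nl_energy nu \<epsilon> u \<le> ennreal (C^3 + C) * (\<integral>\<^sup>+y. mean_osc u (2 * \<epsilon>) y \<partial>nu)"
proof -
  let ?G = "mean_osc u (2 * \<epsilon>)"
  have "nl_energy nu \<epsilon> u
      \<le> (\<integral>\<^sup>+x. ennreal (C^2) * (ennreal (1 / vol x \<epsilon>) * (\<integral>\<^sup>+y\<in>ball x \<epsilon>. ?G y \<partial>nu)) + ennreal C * ?G x \<partial>nu)"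
    unfolding nl_energy_def by (intro nn_integral_mono ball_average_abs_diff_le_mean_osc e) measurable
  also have "\<dots> = ennreal (C^2) * (\<integral>\<^sup>+x. ennreal (1 / vol x \<epsilon>) * (\<integral>\<^sup>+y\<in>ball x \<epsilon>. ?G y \<partial>nu) \<partial>nu)
      + ennreal C * integral\<^sup>N nu ?G"
    by (simp add: nn_integral_add nn_integral_cmult)
  also have "\<dots> \<le> ennreal (C^2) * (ennreal (C^1) * integral\<^sup>N nu ?G) + ennreal C * integral\<^sup>N nu ?G"
    by (intro add_mono mult_left_mono nn_integral_ball_average_le[OF e]) simp_all
  also have "\<dots> = (ennreal (C^2) * ennreal C + ennreal C) * integral\<^sup>N nu ?G"
    by (simp add: distrib_right mult.assoc)
  also have "ennreal (C^2) * ennreal C + ennreal C = ennreal (C^3 + C)"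
    using doubling_const by (simp add: ennreal_mult[symmetric] power3_eq_cube power2_eq_square)
  finally show ?thesis .
qed

lemma nn_integral_mean_osc_le:
  assumes [measurable]: "u \<in> borel_measurable nu" and R: "R > 0"
  shows "(\<integral>\<^sup>+y. mean_osc u R y \<partial>nu)
    \<le> ennreal C * (\<integral>\<^sup>+z. ennreal (1 / vol z R) * (\<integral>\<^sup>+y\<in>ball z R. ennreal \<bar>u y - avg nu (ball z R) u\<bar> \<partial>nu) \<partial>nu)"
proof -
  let ?f = "\<lambda>y z. ennreal \<bar>u y - avg nu (ball z R) u\<bar>"
  have inv_vol: "ennreal (1 / vol y R) \<le> ennreal (C / vol z R)" if "dist y z < R" for y z
  proof (rule ennreal_leI)
    have "vol z R \<le> vol y (R + R)" by (rule vol_le_shift) (use that in simp)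
    also have "\<dots> \<le> C * vol y R" using vol_double[OF R, of y] by (simp add: mult_2[symmetric])
    finally show "1 / vol y R \<le> C / vol z R"
      using vol_pos[OF R, of y] vol_pos[OF R, of z] by (simp add: field_simps)
  qed
  have "(\<integral>\<^sup>+y. mean_osc u R y \<partial>nu) = (\<integral>\<^sup>+y. (\<integral>\<^sup>+z\<in>ball y R. ennreal (1 / vol y R) * ?f y z \<partial>nu) \<partial>nu)"
    unfolding mean_osc_def by (intro nn_integral_cong) (simp add: nn_integral_cmult[symmetric] mult.assoc)
  also have "\<dots> \<le> (\<integral>\<^sup>+y. (\<integral>\<^sup>+z\<in>ball y R. ennreal (C / vol z R) * ?f y z \<partial>nu) \<partial>nu)"
    by (intro nn_integral_mono) (auto intro!: mult_right_mono inv_vol simp: dist_commute split: split_indicator)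
  also have "\<dots> = (\<integral>\<^sup>+z. (\<integral>\<^sup>+y\<in>ball z R. ennreal (C / vol z R) * ?f y z \<partial>nu) \<partial>nu)"
    by (rule nn_integral_ball_swap) measurable
  also have "\<dots> = ennreal C * (\<integral>\<^sup>+z. ennreal (1 / vol z R) * (\<integral>\<^sup>+y\<in>ball z R. ?f y z \<partial>nu) \<partial>nu)"
    using doubling_const vol_nonneg
    by (simp add: nn_integral_cmult mult.assoc divide_inverse ennreal_mult flip: nn_integral_cmult)
  finally show ?thesis .
qed

lemma nl_energy_le_liminf:
  assumes e: "\<epsilon> > 0" and [measurable]: "\<And>n. w n \<in> borel_measurable nu" "f \<in> borel_measurable nu"
    and lim: "AE x in nu. (\<lambda>n. w n x) \<longlonglongrightarrow> f x"
  shows "nl_energy nu \<epsilon> f \<le> liminf (\<lambda>n. nl_energy nu \<epsilon> (w n))"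
proof -
  have "nl_energy nu \<epsilon> f
      \<le> (\<integral>\<^sup>+x. liminf (\<lambda>n. (1 / emeasure nu (ball x \<epsilon>)) * (\<integral>\<^sup>+y\<in>ball x \<epsilon>. ennreal \<bar>w n y - w n x\<bar> \<partial>nu)) \<partial>nu)"
    unfolding nl_energy_def
  proof (rule nn_integral_mono_AE, rule AE_mp[OF lim], intro AE_I2 impI)
    fix x assume "(\<lambda>n. w n x) \<longlonglongrightarrow> f x"
    with lim show "(1 / emeasure nu (ball x \<epsilon>)) * (\<integral>\<^sup>+y\<in>ball x \<epsilon>. ennreal \<bar>f y - f x\<bar> \<partial>nu)
        \<le> liminf (\<lambda>n. (1 / emeasure nu (ball x \<epsilon>)) * (\<integral>\<^sup>+y\<in>ball x \<epsilon>. ennreal \<bar>w n y - w n x\<bar> \<partial>nu))"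
      by (intro set_nn_integral_abs_diff_le_liminf) (simp_all add: one_div_emeasure_ball[OF e])
  qed
  also have "\<dots> \<le> liminf (\<lambda>n. nl_energy nu \<epsilon> (w n))"
    unfolding nl_energy_def by (rule nn_integral_liminf) measurable
  finally show ?thesis .
qed

lemma BV_metric_AE_approximation:
  assumes "psi \<in> BV_metric nu"
  obtains w :: "nat \<Rightarrow> 'a \<Rightarrow> real" and S :: real
  where "\<And>n. locally_lipschitz (w n)" "AE x in nu. (\<lambda>n. w n x) \<longlonglongrightarrow> psi x"
    "S \<ge> 0" "\<And>n. (\<integral>\<^sup>+x. slope (w n) x \<partial>nu) \<le> ennreal S"
proof -
  from assms obtain v where psi_int: "integrable nu psi" and v_lip: "\<And>n. locally_lipschitz (v n)"
    and v_L1: "(\<lambda>n. \<integral>\<^sup>+x. ennreal \<bar>v n x - psi x\<bar> \<partial>nu) \<longlonglongrightarrow> 0"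
    and v_slope: "(SUP n. \<integral>\<^sup>+x. slope (v n) x \<partial>nu) < \<infinity>"
    unfolding BV_metric_def by blast
  note [measurable] = borel_measurable_integrable[OF psi_int] locally_lipschitz_measurable[OF v_lip]
  define S where "S = enn2real (SUP n. \<integral>\<^sup>+x. slope (v n) x \<partial>nu)"
  have S: "(\<integral>\<^sup>+x. slope (v n) x \<partial>nu) \<le> ennreal S" for n
    unfolding S_def using v_slope by (simp add: less_top) (meson SUP_upper UNIV_I)
  \<comment> \<open>\<open>v n - psi\<close> is integrable once its \<open>L\<^sup>1\<close> distance to \<open>psi\<close> is finite, i.e. for \<open>n \<ge> N\<close>.\<close>
  obtain N where N: "\<And>n. n \<ge> N \<Longrightarrow> (\<integral>\<^sup>+x. ennreal \<bar>v n x - psi x\<bar> \<partial>nu) < 1"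
    using order_tendstoD(2)[OF v_L1, of 1] by (auto simp: eventually_sequentially)
  have int: "integrable nu (\<lambda>x. v (n + N) x - psi x)" for n
    using order.strict_trans[OF N[of "n + N"] ennreal_one_less_top] by (intro integrableI_bounded) simp_all
  have "ennreal (\<integral>x. norm (v (n + N) x - psi x) \<partial>nu) = (\<integral>\<^sup>+x. ennreal \<bar>v (n + N) x - psi x\<bar> \<partial>nu)" for n
    using nn_integral_eq_integral[OF integrable_norm[OF int]] by simp
  then have "(\<lambda>n. ennreal (\<integral>x. norm (v (n + N) x - psi x) \<partial>nu)) \<longlonglongrightarrow> ennreal 0"
    using LIMSEQ_ignore_initial_segment[OF v_L1, of N] by simp
  then have "(\<lambda>n. \<integral>x. norm (v (n + N) x - psi x) \<partial>nu) \<longlonglongrightarrow> 0"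
    by (subst (asm) tendsto_ennreal_iff) auto
  then obtain r :: "nat \<Rightarrow> nat" where "AE x in nu. (\<lambda>n. v (r n + N) x - psi x) \<longlonglongrightarrow> 0"
    using tendsto_L1_AE_subseq[where u="\<lambda>n x. v (n + N) x - psi x", OF int] by blast
  then have "AE x in nu. (\<lambda>n. v (r n + N) x) \<longlonglongrightarrow> psi x"
    by eventually_elim (simp add: LIM_zero_iff)
  with v_lip S show ?thesis
    using that[of "\<lambda>n. v (r n + N)" S] by (simp add: S_def)
qed

end

section \<open>Spaces supporting a 1-Poincare inequality\<close>

locale doubling_poincare_space = doubling_space +
  fixes c lam :: real
  assumes poincare_const: "c > 0"
    and poincare_dilation: "lam \<ge> 1"
    and poincare: "L-lipschitz_on UNIV u \<Longrightarrow> r > 0 \<Longrightarrow>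
      (\<integral>\<^sup>+y\<in>ball x r. ennreal \<bar>u y - avg nu (ball x r) u\<bar> \<partial>nu)
        \<le> ennreal (c * r) * (\<integral>\<^sup>+y\<in>ball x (lam * r). slope u y \<partial>nu)"
begin

text \<open>Lipschitz on a ball containing the dilated ball, then extended to all of \<open>X\<close>; the extension
  changes neither side of the inequality.\<close>

lemma poincare_locally_lipschitz:
  assumes u: "locally_lipschitz u" and r: "r > 0"
  shows "(\<integral>\<^sup>+y\<in>ball z r. ennreal \<bar>u y - avg nu (ball z r) u\<bar> \<partial>nu)
      \<le> ennreal (c * r) * (\<integral>\<^sup>+y\<in>ball z (lam * r). slope u y \<partial>nu)"
proof -
  define K where "K = cball z (lam * r)"
  obtain L where L: "L-lipschitz_on K u"
    using locally_lipschitz_lipschitz_on_cball[OF u] unfolding K_def by blast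
  have z: "z \<in> K" unfolding K_def using poincare_dilation r by simp
  have "u z - L * (lam * r) \<le> u w" if "w \<in> K" for w
  proof -
    have "dist (u w) (u z) \<le> L * dist w z" by (rule lipschitz_onD[OF L that z])
    also have "\<dots> \<le> L * (lam * r)"
      using that lipschitz_on_nonneg[OF L] unfolding K_def by (intro mult_left_mono) (auto simp: dist_commute)
    finally show ?thesis by (simp add: dist_real_def abs_le_iff)
  qed
  then have "bdd_below (u ` K)" by (rule bdd_belowI2)
  then obtain v where v: "L-lipschitz_on UNIV v" "\<And>x. x \<in> K \<Longrightarrow> v x = u x"
    using mcshane_extension[OF L] z by blast
  have "r \<le> lam * r" using poincare_dilation r by simp
  then have ball_r: "ball z r \<subseteq> K" and ball_lam_r: "ball z (lam * r) \<subseteq> K"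
    unfolding K_def by auto
  have "avg nu (ball z r) v = avg nu (ball z r) u"
    unfolding avg_def set_lebesgue_integral_def
    using v(2) ball_r by (intro arg_cong2[where f="(/)"] Bochner_Integration.integral_cong) (auto simp: indicator_def)
  then have "(\<integral>\<^sup>+y\<in>ball z r. ennreal \<bar>u y - avg nu (ball z r) u\<bar> \<partial>nu)
      = (\<integral>\<^sup>+y\<in>ball z r. ennreal \<bar>v y - avg nu (ball z r) v\<bar> \<partial>nu)"
    using v(2) ball_r by (intro nn_integral_cong) (auto simp: indicator_def)
  also have "\<dots> \<le> ennreal (c * r) * (\<integral>\<^sup>+y\<in>ball z (lam * r). slope v y \<partial>nu)"
    by (rule poincare[OF v(1) r])
  also have "(\<integral>\<^sup>+y\<in>ball z (lam * r). slope v y \<partial>nu) = (\<integral>\<^sup>+y\<in>ball z (lam * r). slope u y \<partial>nu)"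
    using v(2) ball_lam_r
    by (intro nn_integral_cong) (auto simp: indicator_def intro!: slope_cong_open[of "ball z (lam * r)"])
  finally show ?thesis .
qed

lemma nn_integral_mean_osc_le_slope:
  assumes u: "locally_lipschitz u" and R: "R > 0" and k: "2 * lam \<le> 2^k"
  shows "(\<integral>\<^sup>+y. mean_osc u R y \<partial>nu) \<le> ennreal (C * c * R * C^k) * (\<integral>\<^sup>+y. slope u y \<partial>nu)"
proof (cases "(\<integral>\<^sup>+y. slope u y \<partial>nu) = \<infinity>")
  case True
  have "ennreal (C * c * R * C^k) * \<infinity> = \<infinity>"
    using doubling_const poincare_const R by (simp add: ennreal_mult_eq_top_iff)
  then show ?thesis using True by simp
next
  case False
  obtain g where g: "g \<in> borel_measurable nu" "\<And>x. g x \<le> slope u x"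
      "integral\<^sup>N nu g = integral\<^sup>N nu (slope u)"
    using nn_integral_measurable_minorant[where M=nu and s="slope u"] by blast
  note [measurable] = g(1) locally_lipschitz_measurable[OF u]
  have poincare_g: "(\<integral>\<^sup>+y\<in>ball z R. ennreal \<bar>u y - avg nu (ball z R) u\<bar> \<partial>nu)
      \<le> ennreal (c * R) * (\<integral>\<^sup>+y\<in>ball z (lam * R). g y \<partial>nu)" for z
  proof -
    have "(\<integral>\<^sup>+y\<in>ball z (lam * R). slope u y \<partial>nu) \<le> (\<integral>\<^sup>+y\<in>ball z (lam * R). g y \<partial>nu)"
      using False by (intro nn_integral_set_le_measurable_minorant[OF g]) (simp_all add: less_top)
    then have "ennreal (c * R) * (\<integral>\<^sup>+y\<in>ball z (lam * R). slope u y \<partial>nu)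
        \<le> ennreal (c * R) * (\<integral>\<^sup>+y\<in>ball z (lam * R). g y \<partial>nu)"
      by (rule mult_left_mono) simp
    with poincare_locally_lipschitz[OF u R, of z] show ?thesis by (rule order_trans)
  qed
  have "(\<integral>\<^sup>+y. mean_osc u R y \<partial>nu)
      \<le> ennreal C * (\<integral>\<^sup>+z. ennreal (1 / vol z R) * (\<integral>\<^sup>+y\<in>ball z R. ennreal \<bar>u y - avg nu (ball z R) u\<bar> \<partial>nu) \<partial>nu)"
    by (rule nn_integral_mean_osc_le[OF _ R]) measurable
  also have "\<dots> \<le> ennreal C * (\<integral>\<^sup>+z. ennreal (1 / vol z R) * (ennreal (c * R) * (\<integral>\<^sup>+y\<in>ball z (lam * R). g y \<partial>nu)) \<partial>nu)"
    by (intro mult_left_mono nn_integral_mono poincare_g) simp_all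
  also have "\<dots> = ennreal C * ennreal (c * R) * (\<integral>\<^sup>+z. ennreal (1 / vol z R) * (\<integral>\<^sup>+y\<in>ball z (lam * R). g y \<partial>nu) \<partial>nu)"
    by (simp add: nn_integral_cmult mult_ac flip: nn_integral_cmult)
  also have "\<dots> \<le> ennreal C * ennreal (c * R) * (ennreal (C^k) * integral\<^sup>N nu g)"
    using k R by (intro mult_left_mono nn_integral_ball_average_le) simp_all
  also have "\<dots> = ennreal (C * c * R * C^k) * (\<integral>\<^sup>+y. slope u y \<partial>nu)"
    using g(3) doubling_const poincare_const R by (simp add: ennreal_mult mult_ac)
  finally show ?thesis .
qed

lemma nl_energy_le_slope:
  assumes u: "locally_lipschitz u" and e: "\<epsilon> > 0" and k: "2 * lam \<le> 2^k"
  shows "nl_energy nu \<epsilon> u \<le> ennreal ((C^3 + C) * (2 * c * C^Suc k) * \<epsilon>) * (\<integral>\<^sup>+y. slope u y \<partial>nu)"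
proof -
  have "nl_energy nu \<epsilon> u \<le> ennreal (C^3 + C) * (\<integral>\<^sup>+y. mean_osc u (2 * \<epsilon>) y \<partial>nu)"
    by (rule nl_energy_le_mean_osc[OF locally_lipschitz_measurable[OF u] e])
  also have "\<dots> \<le> ennreal (C^3 + C) * (ennreal (C * c * (2 * \<epsilon>) * C^k) * (\<integral>\<^sup>+y. slope u y \<partial>nu))"
    using e by (intro mult_left_mono nn_integral_mean_osc_le_slope[OF u _ k]) simp_all
  also have "\<dots> = ennreal ((C^3 + C) * (2 * c * C^Suc k) * \<epsilon>) * (\<integral>\<^sup>+y. slope u y \<partial>nu)"
    using doubling_const poincare_const e
    by (simp add: mult.assoc[symmetric] ennreal_mult[symmetric] del: ennreal_plus) (simp add: mult_ac)
  finally show ?thesis .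
qed

lemma nl_energy_BV_metric_le:
  assumes psi: "psi \<in> BV_metric nu"
  obtains M where "M \<ge> 0" "\<And>\<epsilon>. \<epsilon> > 0 \<Longrightarrow> nl_energy nu \<epsilon> psi \<le> ennreal (M * \<epsilon>)"
proof -
  obtain k where k: "2 * lam \<le> 2^k"
    using real_arch_pow[of 2 "2 * lam"] by (auto intro: less_imp_le)
  define K where "K = (C^3 + C) * (2 * c * C^Suc k)"
  have K: "K \<ge> 0" unfolding K_def using doubling_const poincare_const by simp
  obtain w S where w_lip: "\<And>n. locally_lipschitz (w n)" and w_lim: "AE x in nu. (\<lambda>n. w n x) \<longlonglongrightarrow> psi x"
    and S: "S \<ge> 0" "\<And>n. (\<integral>\<^sup>+x. slope (w n) x \<partial>nu) \<le> ennreal S"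
    using BV_metric_AE_approximation[OF psi] by blast
  have psi_meas: "psi \<in> borel_measurable nu"
    using psi by (auto simp: BV_metric_def)
  show ?thesis
  proof (rule that[of "K * S"])
    show "K * S \<ge> 0" using K S(1) by simp
    fix \<epsilon> :: real assume e: "\<epsilon> > 0"
    have "nl_energy nu \<epsilon> (w n) \<le> ennreal (K * S * \<epsilon>)" for n
    proof -
      have "nl_energy nu \<epsilon> (w n) \<le> ennreal (K * \<epsilon>) * (\<integral>\<^sup>+x. slope (w n) x \<partial>nu)"
        unfolding K_def by (rule nl_energy_le_slope[OF w_lip e k])
      also have "\<dots> \<le> ennreal (K * \<epsilon>) * ennreal S"
        by (rule mult_left_mono[OF S(2)]) simp
      finally show ?thesis
        using K S(1) e by (simp add: mult_ac flip: ennreal_mult)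
    qed
    then have "liminf (\<lambda>n. nl_energy nu \<epsilon> (w n)) \<le> ennreal (K * S * \<epsilon>)"
      by (intro Liminf_le) simp_all
    with nl_energy_le_liminf[OF e locally_lipschitz_measurable[OF w_lip] psi_meas w_lim]
    show "nl_energy nu \<epsilon> psi \<le> ennreal (K * S * \<epsilon>)"
      by (rule order_trans)
  qed
qed

end

lemma doubling_poincare_space_exists:
  assumes sets_nu: "sets nu = sets borel" and finite: "finite_measure nu"
    and doubling: "doubling_measure nu" and poincare: "poincare_1 nu"
  obtains C c lam where "doubling_poincare_space nu C c lam"
proof -
  obtain C where C: "C \<ge> 1" and D: "\<And>x r. r > 0 \<Longrightarrow> 0 < emeasure nu (ball x (2 * r)) \<and>
      emeasure nu (ball x (2 * r)) \<le> ennreal C * emeasure nu (ball x r)"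
    using doubling unfolding doubling_measure_def by blast
  obtain c lam where c: "c > 0" and lam: "lam \<ge> 1" and P: "\<forall>u x r. (\<exists>L. L-lipschitz_on UNIV u) \<longrightarrow> r > 0 \<longrightarrow>
      (\<integral>\<^sup>+ y\<in>ball x r. ennreal \<bar>u y - avg nu (ball x r) u\<bar> \<partial>nu)
        \<le> ennreal (c * r) * (\<integral>\<^sup>+ y\<in>ball x (lam * r). slope u y \<partial>nu)"
    using poincare unfolding poincare_1_def by blast
  have "doubling_poincare_space nu C c lam"
  proof (intro doubling_poincare_space.intro doubling_space.intro doubling_space_axioms.intro
      doubling_poincare_space_axioms.intro finite sets_nu C c lam)
    show "0 < emeasure nu (ball x r)" if "r > 0" for x r
      using D[of "r / 2" x] that by simp
  qed (use D P in blast)+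
  then show ?thesis using that by blast
qed

lemma nl_least_gradient_energy_le:
  assumes "nl_least_gradient nu eps \<Omega> psi u" "psi \<in> BV_rw nu eps"
  shows "nl_energy nu eps u \<le> nl_energy nu eps psi"
proof -
  have "nl_energy nu eps u / 2 \<le> nl_energy nu eps psi / 2"
    using assms unfolding nl_least_gradient_def TV_rw_def by auto
  then have "nl_energy nu eps u / 2 * 2 \<le> nl_energy nu eps psi / 2 * 2"
    by (rule mult_right_mono) simp
  then show ?thesis by (simp add: ennreal_divide_times divide_eq_1_ennreal)
qed

theorem mainTheorem8:
  fixes nu :: "'a::polish_space measure"
    and \<Omega> :: "'a set"
    and psi :: "'a \<Rightarrow> real"
    and u :: "real \<Rightarrow> 'a \<Rightarrow> real"
  assumes sets_nu: "sets nu = sets borel"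
    and finite: "finite_measure nu"
    and doubling: "doubling_measure nu"
    and poincare: "poincare_1 nu"
    and ergodic: "\<And>eps. eps > 0 \<Longrightarrow> rw_ergodic nu eps"
    and Omega_meas: "\<Omega> \<in> sets nu"
    and Omega_bdd: "bounded \<Omega>"
    and Omega_pos: "0 < measure nu \<Omega>"
    and Omega_lt: "measure nu \<Omega> < measure nu (space nu)"
    and psi_BV: "psi \<in> BV_metric nu"
    and psi_Linf: "psi \<in> Linfty nu"
    and sol: "\<And>eps. eps > 0 \<Longrightarrow> nl_least_gradient nu eps \<Omega> psi (u eps)"
  shows "\<exists>M::real. M \<ge> 0 \<and> (\<exists>epsk :: nat \<Rightarrow> real. (\<forall>k. epsk k > 0) \<and> epsk \<longlonglongrightarrow> 0 \<and>
           (\<forall>k. (\<integral>\<^sup>+ x. (1 / emeasure nu (ball x (epsk k))) *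
                   (\<integral>\<^sup>+ y\<in>ball x (epsk k). ennreal \<bar>u (epsk k) y - u (epsk k) x\<bar> \<partial>nu) \<partial>nu)
                 \<le> ennreal (M * epsk k)))"
proof -
  obtain Cd c lam where "doubling_poincare_space nu Cd c lam"
    using doubling_poincare_space_exists[OF sets_nu finite doubling poincare] .
  then interpret doubling_poincare_space nu Cd c lam .
  obtain M where M: "M \<ge> 0" "\<And>\<epsilon>. \<epsilon> > 0 \<Longrightarrow> nl_energy nu \<epsilon> psi \<le> ennreal (M * \<epsilon>)"
    using nl_energy_BV_metric_le[OF psi_BV] by blast
  have u_energy: "nl_energy nu \<epsilon> (u \<epsilon>) \<le> ennreal (M * \<epsilon>)" if e: "\<epsilon> > 0" for \<epsilon>
  proof -
    have "psi \<in> BV_rw nu \<epsilon>"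
      using psi_BV M(2)[OF e] by (auto simp: BV_rw_def BV_metric_def intro: le_less_trans)
    with sol[OF e] have "nl_energy nu \<epsilon> (u \<epsilon>) \<le> nl_energy nu \<epsilon> psi"
      by (rule nl_least_gradient_energy_le)
    also have "\<dots> \<le> ennreal (M * \<epsilon>)" by (rule M(2)[OF e])
    finally show ?thesis .
  qed
  show ?thesis
    using M(1) u_energy LIMSEQ_inverse_real_of_nat unfolding nl_energy_def
    by (intro exI[of _ M] conjI exI[of _ "\<lambda>n. inverse (real (Suc n))"]) auto
qed

end
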